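(* Let $F_0$ and $F_s$ be distribution functions, with $U_r(t):=F_r^{\leftarrow}(1-1/t)$ for $t>1$, $r\in\{0,s\}$, and let $\gamma\in\mathbb{R}$, $\rho\le0$, $c\in\mathbb{R}$, $s\in\mathbb{R}$. Let $a_0$ be a positive function and $\alpha_0$ a function, eventually of constant sign, with $\lim_{t\to\infty}\alpha_0(t)=0$, such that for each $x>0$ $$\lim_{t\to\infty}\frac{\frac{U_0(tx)-U_0(t)}{a_0(t)}-\frac{x^\gamma-1}{\gamma}}{\alpha_0(t)}=H_{\gamma,\rho}(x)$$ and $$\lim_{t\to\infty}\frac{\frac{U_s(t)-U_0(t)}{a_0(t)}-\frac{e^{c\gamma s}-1}{\gamma}}{\alpha_0(t)}=H_{\gamma,\rho}(e^{cs}).$$ Define $\alpha_s(t):=e^{cs\rho}\alpha_0(t)$ and $a_s(t):=e^{cs\gamma}a_0(t)\bigl(1+\alpha_0(t)\frac{e^{cs\rho}-1}{\rho}\bigr)$. Then for every $x>0$ $$\lim_{t\to\infty}\frac{\frac{U_s(tx)-U_s(t)}{a_s(t)}-\frac{x^\gamma-1}{\gamma}}{\alpha_s(t)}=H_{\gamma,\rho}(x).$$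
   Context: $F^{\leftarrow}$ denotes the generalized inverse. $H_{\gamma,\rho}(x):=\frac1\rho\Bigl(\frac{x^{\gamma+\rho}-1}{\gamma+\rho}-\frac{x^\gamma-1}{\gamma}\Bigr)$ for $x>0$, defined by continuity when $\gamma=0$, $\rho=0$ or $\gamma+\rho=0$. Likewise $\frac{x^\gamma-1}{\gamma}:=\log x$ and $\frac{e^{c\gamma s}-1}{\gamma}:=cs$ when $\gamma=0$, and $\frac{e^{cs\rho}-1}{\rho}:=cs$ when $\rho=0$. *)

theory Defs
  imports "HOL-Analysis.Analysis"
begin

definition distr_fun :: "(real \<Rightarrow> real) \<Rightarrow> bool" where
  "distr_fun F \<longleftrightarrow> mono F \<and> (\<forall>x. continuous (at_right x) F)
     \<and> (F \<longlongrightarrow> 0) at_bot \<and> (F \<longlongrightarrow> 1) at_top"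

definition gen_inv :: "(real \<Rightarrow> real) \<Rightarrow> real \<Rightarrow> real" where
  "gen_inv F p = Inf {x. p \<le> F x}"

definition tailq :: "(real \<Rightarrow> real) \<Rightarrow> real \<Rightarrow> real" where
  "tailq F t = gen_inv F (1 - 1 / t)"

definition qpow :: "real \<Rightarrow> real \<Rightarrow> real" where
  "qpow g x = (if g = 0 then ln x else (x powr g - 1) / g)"

text \<open>H_{g,r}(x) = (1/r)(qpow (g+r) x - qpow g x), extended by continuity at r = 0
  (derivative of qpow in the exponent).\<close>
definition Hfun :: "real \<Rightarrow> real \<Rightarrow> real \<Rightarrow> real" where
  "Hfun g r x = (if r \<noteq> 0 then (qpow (g + r) x - qpow g x) / r
     else if g = 0 then (ln x)\<^sup>2 / 2
     else (x powr g * ln x) / g - (x powr g - 1) / g\<^sup>2)"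

end

theory Submission
  imports Defs
begin

text \<open>With e = exp(c s), split U_s(tx) - U_s(t) as (U_0(txe) - U_0(te)) + (U_s(tx) - U_0(txe))
  - (U_s(t) - U_0(te)). By the two hypotheses the last bracket is o(a_0(t) \<alpha>_0(t)), and so is
  the middle one, because the second-order condition forces
  a_0(tx) \<alpha>_0(tx) / (a_0(t) \<alpha>_0(t)) \<rightarrow> x^(\<gamma>+\<rho>). The first bracket is governed by the
  second-order condition for U_0 at xe and e, and the multiplicative identities for qpow and
  Hfun turn its limit, after renormalising with a_s and \<alpha>_s, into Hfun \<gamma> \<rho> x.\<close>

definition second_order_quotient ::
    "(real \<Rightarrow> real) \<Rightarrow> (real \<Rightarrow> real) \<Rightarrow> (real \<Rightarrow> real) \<Rightarrow> real \<Rightarrow> real \<Rightarrow> real \<Rightarrow> real" where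
  "second_order_quotient U a \<alpha> \<gamma> x t = ((U (t * x) - U t) / a t - qpow \<gamma> x) / \<alpha> t"

definition second_order_erv ::
    "(real \<Rightarrow> real) \<Rightarrow> (real \<Rightarrow> real) \<Rightarrow> (real \<Rightarrow> real) \<Rightarrow> real \<Rightarrow> real \<Rightarrow> bool" where
  "second_order_erv U a \<alpha> \<gamma> \<rho> \<longleftrightarrow>
     (\<forall>x>0. (second_order_quotient U a \<alpha> \<gamma> x \<longlongrightarrow> Hfun \<gamma> \<rho> x) at_top)"

lemma qpow_1 [simp]: "qpow g 1 = 0"
  by (simp add: qpow_def)

lemma Hfun_1 [simp]: "Hfun g r 1 = 0"
  by (simp add: Hfun_def)

lemma qpow_pos: "y > 1 \<Longrightarrow> qpow g y > 0"
  by (cases g "0::real" rule: linorder_cases)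
     (auto simp: qpow_def divide_pos_pos divide_neg_neg powr_less_one)

lemma qpow_mult: "x > 0 \<Longrightarrow> y > 0 \<Longrightarrow> qpow g (x * y) = qpow g y + y powr g * qpow g x"
  by (auto simp: qpow_def ln_mult powr_mult field_simps)

lemma Hfun_mult:
  assumes "x > 0" "y > 0"
  shows "Hfun g r (x * y) = Hfun g r y + y powr g * qpow r y * qpow g x + y powr (g + r) * Hfun g r x"
proof (cases "r = 0")
  case False
  then have "qpow r y = (y powr r - 1) / r" by (simp add: qpow_def)
  with False assms show ?thesis
    unfolding Hfun_def by (simp only:) (simp add: qpow_mult powr_add field_simps)
next
  case True
  with assms show ?thesis
    by (cases "g = 0") (auto simp: Hfun_def qpow_def ln_mult powr_mult field_simps power2_eq_square)
qed

lemma Hfun_qpow_det: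
  assumes "y > 0"
  shows "Hfun g r y * qpow g (1 / y) - Hfun g r (1 / y) * qpow g y
           = - qpow g y * qpow r y * qpow (g + r) y / y powr (g + r)"
proof -
  have q: "qpow g (1 / y) = - qpow g y / y powr g"
    using qpow_mult[of "1 / y" y g] assms by (simp add: field_simps)
  have H: "Hfun g r (1 / y) = - (Hfun g r y - qpow r y * qpow g y) / y powr (g + r)"
    using Hfun_mult[of "1 / y" y g r] assms by (simp add: q powr_add field_simps)
  have key: "Hfun g r y * (1 - y powr r) - qpow r y * qpow g y = - qpow r y * qpow (g + r) y"
    using assms by (cases "r = 0") (auto simp: Hfun_def qpow_def field_simps)
  have "Hfun g r y * qpow g (1 / y) - Hfun g r (1 / y) * qpow g y
          = qpow g y * (Hfun g r y * (1 - y powr r) - qpow r y * qpow g y) / y powr (g + r)"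
    using assms by (simp add: q H powr_add field_simps)
  then show ?thesis
    by (simp add: key)
qed

lemma linear_system_2_solve_fst:
  fixes v u h1 h2 q1 q2 b1 b2 :: real
  assumes "v * h1 - u * q1 = b1" "v * h2 - u * q2 = b2" "h1 * q2 - h2 * q1 \<noteq> 0"
  shows "v = (b1 * q2 - b2 * q1) / (h1 * q2 - h2 * q1)"
proof -
  have "v * (h1 * q2 - h2 * q1) = (v * h1 - u * q1) * q2 - (v * h2 - u * q2) * q1"
    by (simp add: algebra_simps)
  with assms show ?thesis
    by (simp add: field_simps)
qed

lemma filterlim_at_top_mult_const:
  "x > 0 \<Longrightarrow> filterlim (\<lambda>t. t * x) at_top (at_top :: real filter)"
  by (rule filterlim_at_top_mult_tendsto_pos[OF tendsto_const _ filterlim_ident])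

text \<open>Splitting U(txy) - U(tx) as (U(txy) - U(t)) - (U(tx) - U(t)) gives, for every y > 0, a
  linear relation v(t) r_y(tx) - u(t) q(y) = r_xy(t) - r_x(t) between the ratio v in question and
  an auxiliary u; the relations for y = 2 and y = 1/2 have nonvanishing determinant
  (Hfun_qpow_det), so they determine v(t), and its limit follows from that of the r's.\<close>
lemma second_order_erv_scale_ratio:
  assumes erv: "second_order_erv U a \<alpha> \<gamma> \<rho>"
    and a: "\<forall>\<^sub>F t in at_top. a t \<noteq> 0" and \<alpha>: "\<forall>\<^sub>F t in at_top. \<alpha> t \<noteq> 0"
    and x: "x > 0"
  shows "((\<lambda>t. a (t * x) * \<alpha> (t * x) / (a t * \<alpha> t)) \<longlongrightarrow> x powr (\<gamma> + \<rho>)) at_top"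
proof -
  define r where "r = second_order_quotient U a \<alpha> \<gamma>"
  define q where "q = qpow \<gamma>"
  define H where "H = Hfun \<gamma> \<rho>"
  define v where "v t = a (t * x) * \<alpha> (t * x) / (a t * \<alpha> t)" for t
  define u where "u t = (x powr \<gamma> - a (t * x) / a t) / \<alpha> t" for t
  have tx: "filterlim (\<lambda>t. t * x) at_top at_top"
    using x by (rule filterlim_at_top_mult_const)
  have r_lim: "(r y \<longlongrightarrow> H y) at_top" if "y > 0" for y
    using erv that by (simp add: second_order_erv_def r_def H_def)
  have r_lim_tx: "((\<lambda>t. r y (t * x)) \<longlongrightarrow> H y) at_top" if "y > 0" for y
    using filterlim_compose[OF r_lim[OF that] tx] .
  have a_tx: "\<forall>\<^sub>F t in at_top. a (t * x) \<noteq> 0" and \<alpha>_tx: "\<forall>\<^sub>F t in at_top. \<alpha> (t * x) \<noteq> 0"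
    using a \<alpha> tx by (auto simp: filterlim_iff)
  have relation: "\<forall>\<^sub>F t in at_top. v t * r y (t * x) - u t * q y = r (x * y) t - r x t"
    if y: "y > 0" for y
    using a \<alpha> a_tx \<alpha>_tx
  proof eventually_elim
    case (elim t)
    have "U (t * (x * y)) = U (t * x * y)" by (simp add: mult.assoc)
    moreover have "q (x * y) = q x + x powr \<gamma> * q y"
      using qpow_mult[OF y x, of \<gamma>] by (simp add: q_def mult.commute)
    ultimately show ?case using elim
      by (simp add: v_def u_def r_def q_def second_order_quotient_def field_simps)
  qed
  have two: "(2::real) > 0" "1 / 2 > (0::real)" by simp_all
  define d where "d = H 2 * q (1 / 2) - H (1 / 2) * q 2"
  have "d < 0"
    using Hfun_qpow_det[of 2 \<gamma> \<rho>] qpow_pos[of 2] by (simp add: d_def H_def q_def)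
  then have d: "d \<noteq> 0" by simp
  define D where "D t = r 2 (t * x) * q (1 / 2) - r (1 / 2) (t * x) * q 2" for t
  define N where "N t = (r (x * 2) t - r x t) * q (1 / 2) - (r (x * (1 / 2)) t - r x t) * q 2" for t
  have D_lim: "(D \<longlongrightarrow> d) at_top"
    unfolding D_def[abs_def] d_def using two by (intro tendsto_intros r_lim_tx)
  have H_shift: "H (x * y) - H x = x powr \<gamma> * qpow \<rho> x * q y + x powr (\<gamma> + \<rho>) * H y"
    if "y > 0" for y
    using Hfun_mult[OF that x, of \<gamma> \<rho>] by (simp add: H_def q_def mult.commute)
  have N_lim: "(N \<longlongrightarrow> x powr (\<gamma> + \<rho>) * d) at_top"
  proof -
    have "(N \<longlongrightarrow> (H (x * 2) - H x) * q (1 / 2) - (H (x * (1 / 2)) - H x) * q 2) at_top"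
      unfolding N_def[abs_def] using x by (intro tendsto_intros r_lim) auto
    then show ?thesis
      unfolding H_shift[OF two(1)] H_shift[OF two(2)] by (simp add: d_def algebra_simps)
  qed
  have "\<forall>\<^sub>F t in at_top. N t / D t = v t"
    using relation[OF two(1)] relation[OF two(2)] tendsto_imp_eventually_ne[OF D_lim d]
  proof eventually_elim
    case (elim t)
    then show ?case
      unfolding N_def D_def by (intro linear_system_2_solve_fst[symmetric]) (simp_all add: D_def)
  qed
  with tendsto_divide[OF N_lim D_lim d] d show ?thesis
    unfolding v_def by (simp add: tendsto_cong)
qed

lemma tendsto_second_order_renormalize:
  fixes D a \<alpha> :: "'a \<Rightarrow> real"
  assumes lim: "((\<lambda>t. (D t / a t - G * q) / \<alpha> t) \<longlongrightarrow> K) F"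
    and \<alpha>0: "(\<alpha> \<longlongrightarrow> 0) F" and \<alpha>: "\<forall>\<^sub>F t in F. \<alpha> t \<noteq> 0"
    and "G \<noteq> 0" "R \<noteq> 0"
  shows "((\<lambda>t. (D t / (G * a t * (1 + \<alpha> t * Q)) - q) / (R * \<alpha> t)) \<longlongrightarrow> (K / G - Q * q) / R) F"
proof -
  have "((\<lambda>t. 1 + \<alpha> t * Q) \<longlongrightarrow> 1 + 0 * Q) F"
    by (intro tendsto_intros \<alpha>0)
  then have "\<forall>\<^sub>F t in F. 1 + \<alpha> t * Q \<noteq> 0"
    by (simp add: tendsto_imp_eventually_ne)
  with \<alpha> have "\<forall>\<^sub>F t in F. ((D t / a t - G * q) / \<alpha> t / G - Q * q) / (R * (1 + \<alpha> t * Q))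
                             = (D t / (G * a t * (1 + \<alpha> t * Q)) - q) / (R * \<alpha> t)"
  proof eventually_elim
    case (elim t)
    have "((S - G * q) / \<alpha> t / G - Q * q) / (R * (1 + \<alpha> t * Q))
            = (S / (G * (1 + \<alpha> t * Q)) - q) / (R * \<alpha> t)" for S
    proof -
      have "1 + \<alpha> t * Q \<noteq> 0" using elim by (simp add: mult.commute)
      with elim assms(4,5) show ?thesis
        by (simp add: divide_simps) (simp add: algebra_simps)
    qed
    moreover have "D t / (G * a t * (1 + \<alpha> t * Q)) = D t / a t / (G * (1 + \<alpha> t * Q))"
      by (simp add: ac_simps)
    ultimately show ?case
      by simp
  qed
  moreover have "((\<lambda>t. ((D t / a t - G * q) / \<alpha> t / G - Q * q) / (R * (1 + \<alpha> t * Q)))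
                   \<longlongrightarrow> (K / G - Q * q) / (R * (1 + 0 * Q))) F"
    using assms by (intro tendsto_intros lim \<alpha>0) auto
  ultimately show ?thesis
    by (simp add: tendsto_cong)
qed

lemma second_order_erv_shift_increment:
  assumes erv: "second_order_erv U a \<alpha> \<gamma> \<rho>"
    and a: "\<forall>\<^sub>F t in at_top. a t \<noteq> 0" and \<alpha>: "\<forall>\<^sub>F t in at_top. \<alpha> t \<noteq> 0"
    and e: "e > 0"
    and V: "((\<lambda>t. ((V t - U t) / a t - qpow \<gamma> e) / \<alpha> t) \<longlongrightarrow> Hfun \<gamma> \<rho> e) at_top"
    and x: "x > 0"
  shows "((\<lambda>t. ((V (t * x) - V t) / a t - e powr \<gamma> * qpow \<gamma> x) / \<alpha> t)
           \<longlongrightarrow> Hfun \<gamma> \<rho> (x * e) - Hfun \<gamma> \<rho> e) at_top"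
proof -
  define r where "r = second_order_quotient U a \<alpha> \<gamma>"
  define H where "H = Hfun \<gamma> \<rho>"
  define W where "W t = (V t - U (t * e)) / (a t * \<alpha> t)" for t
  define v where "v t = a (t * x) * \<alpha> (t * x) / (a t * \<alpha> t)" for t
  have r_lim: "(r y \<longlongrightarrow> H y) at_top" if "y > 0" for y
    using erv that by (simp add: second_order_erv_def r_def H_def)
  have "\<forall>\<^sub>F t in at_top. ((V t - U t) / a t - qpow \<gamma> e) / \<alpha> t - r e t = W t"
    using a \<alpha> by eventually_elim (simp add: r_def W_def second_order_quotient_def field_simps)
  moreover have "((\<lambda>t. ((V t - U t) / a t - qpow \<gamma> e) / \<alpha> t - r e t) \<longlongrightarrow> H e - H e) at_top"
    using e by (intro tendsto_intros r_lim) (use V in \<open>simp add: H_def\<close>)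
  ultimately have W_lim: "(W \<longlongrightarrow> 0) at_top"
    by (simp add: tendsto_cong)
  have tx: "filterlim (\<lambda>t. t * x) at_top at_top"
    using x by (rule filterlim_at_top_mult_const)
  have a_tx: "\<forall>\<^sub>F t in at_top. a (t * x) \<noteq> 0" and \<alpha>_tx: "\<forall>\<^sub>F t in at_top. \<alpha> (t * x) \<noteq> 0"
    using a \<alpha> tx by (auto simp: filterlim_iff)
  have "\<forall>\<^sub>F t in at_top. r (x * e) t - r e t + v t * W (t * x) - W t
          = ((V (t * x) - V t) / a t - e powr \<gamma> * qpow \<gamma> x) / \<alpha> t"
    using a \<alpha> a_tx \<alpha>_tx
  proof eventually_elim
    case (elim t)
    have "U (t * (x * e)) = U (t * x * e)" by (simp add: mult.assoc)
    moreover have "qpow \<gamma> (x * e) = qpow \<gamma> e + e powr \<gamma> * qpow \<gamma> x"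
      using qpow_mult[OF x e] .
    ultimately show ?case using elim
      by (simp add: r_def v_def W_def second_order_quotient_def field_simps)
  qed
  moreover have "((\<lambda>t. r (x * e) t - r e t + v t * W (t * x) - W t)
                   \<longlongrightarrow> H (x * e) - H e + x powr (\<gamma> + \<rho>) * 0 - 0) at_top"
    unfolding v_def using x e
    by (intro tendsto_intros r_lim second_order_erv_scale_ratio[OF erv a \<alpha>]
          filterlim_compose[OF W_lim tx] W_lim) simp_all
  ultimately show ?thesis
    by (simp add: tendsto_cong H_def)
qed

lemma second_order_erv_shift:
  assumes erv: "second_order_erv U a \<alpha> \<gamma> \<rho>"
    and a: "\<forall>\<^sub>F t in at_top. a t \<noteq> 0" and \<alpha>: "\<forall>\<^sub>F t in at_top. \<alpha> t \<noteq> 0"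
    and \<alpha>0: "(\<alpha> \<longlongrightarrow> 0) at_top" and e: "e > 0"
    and V: "((\<lambda>t. ((V t - U t) / a t - qpow \<gamma> e) / \<alpha> t) \<longlongrightarrow> Hfun \<gamma> \<rho> e) at_top"
  shows "second_order_erv V (\<lambda>t. e powr \<gamma> * a t * (1 + \<alpha> t * qpow \<rho> e)) (\<lambda>t. e powr \<rho> * \<alpha> t) \<gamma> \<rho>"
  unfolding second_order_erv_def
proof (intro allI impI)
  fix x :: real
  assume x: "x > 0"
  note increment = second_order_erv_shift_increment[OF erv a \<alpha> e V x]
  have "(second_order_quotient V (\<lambda>t. e powr \<gamma> * a t * (1 + \<alpha> t * qpow \<rho> e)) (\<lambda>t. e powr \<rho> * \<alpha> t) \<gamma> x
          \<longlongrightarrow> ((Hfun \<gamma> \<rho> (x * e) - Hfun \<gamma> \<rho> e) / e powr \<gamma> - qpow \<rho> e * qpow \<gamma> x) / e powr \<rho>)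
          at_top"
    using tendsto_second_order_renormalize[OF increment \<alpha>0 \<alpha>] e
    by (simp add: second_order_quotient_def[abs_def])
  moreover have "((Hfun \<gamma> \<rho> (x * e) - Hfun \<gamma> \<rho> e) / e powr \<gamma> - qpow \<rho> e * qpow \<gamma> x) / e powr \<rho>
                   = Hfun \<gamma> \<rho> x"
    using Hfun_mult[OF x e, of \<gamma> \<rho>] e by (simp add: powr_add field_simps)
  ultimately show "(second_order_quotient V (\<lambda>t. e powr \<gamma> * a t * (1 + \<alpha> t * qpow \<rho> e))
                      (\<lambda>t. e powr \<rho> * \<alpha> t) \<gamma> x \<longlongrightarrow> Hfun \<gamma> \<rho> x) at_top"
    by simp
qed

theorem lemma1:
  fixes F0 Fs a0 \<alpha>0 :: "real \<Rightarrow> real" and \<gamma> \<rho> c s :: real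
  assumes "distr_fun F0" and "distr_fun Fs"
    and "\<rho> \<le> 0"
    and "\<forall>t. a0 t > 0"
    and "(\<forall>\<^sub>F t in at_top. \<alpha>0 t > 0) \<or> (\<forall>\<^sub>F t in at_top. \<alpha>0 t < 0)"
    and "(\<alpha>0 \<longlongrightarrow> 0) at_top"
    and "\<And>x. x > 0 \<Longrightarrow>
      ((\<lambda>t. ((tailq F0 (t * x) - tailq F0 t) / a0 t - qpow \<gamma> x) / \<alpha>0 t)
        \<longlongrightarrow> Hfun \<gamma> \<rho> x) at_top"
    and "((\<lambda>t. ((tailq Fs t - tailq F0 t) / a0 t - qpow \<gamma> (exp (c * s))) / \<alpha>0 t)
        \<longlongrightarrow> Hfun \<gamma> \<rho> (exp (c * s))) at_top"
  shows "\<forall>x>0. ((\<lambda>t.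
      ((tailq Fs (t * x) - tailq Fs t)
          / (exp (c * s * \<gamma>) * a0 t * (1 + \<alpha>0 t * qpow \<rho> (exp (c * s))))
        - qpow \<gamma> x) / (exp (c * s * \<rho>) * \<alpha>0 t))
      \<longlongrightarrow> Hfun \<gamma> \<rho> x) at_top"
proof -
  have "second_order_erv (tailq F0) a0 \<alpha>0 \<gamma> \<rho>"
    using assms(7) by (simp add: second_order_erv_def second_order_quotient_def[abs_def])
  moreover have "\<forall>\<^sub>F t in at_top. a0 t \<noteq> 0"
    using assms(4) by (simp add: less_imp_neq[symmetric])
  moreover have "\<forall>\<^sub>F t in at_top. \<alpha>0 t \<noteq> 0"
    using assms(5) by (auto elim: eventually_mono)
  ultimately have "second_order_erv (tailq Fs)
      (\<lambda>t. exp (c * s) powr \<gamma> * a0 t * (1 + \<alpha>0 t * qpow \<rho> (exp (c * s))))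
      (\<lambda>t. exp (c * s) powr \<rho> * \<alpha>0 t) \<gamma> \<rho>"
    using assms(6,8) by (intro second_order_erv_shift) auto
  then show ?thesis
    by (simp add: second_order_erv_def second_order_quotient_def[abs_def] powr_def mult_ac)
qed

end
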